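(* Let $T$ be a hyperplane (linear subspace of dimension $n-1$) in $\mathbf{R}^n$, $\alpha\in T$, $f:T\to T^\perp$ a function continuous at $\alpha$, $a=\alpha+f(\alpha)$, $A=\{\chi+f(\chi):\chi\in T\}$, and suppose $\mathrm{Tan}(A,a)\subseteq T$. Then $f$ is differentiable at $\alpha$ with $\mathrm{D}f(\alpha)=0$, and $\mathrm{Tan}(A,a)=T$.
   Context: For $A\subseteq\mathbf{R}^n$ and $a\in\mathbf{R}^n$, the tangent cone $\mathrm{Tan}(A,a)$ is the set of all $v\in\mathbf{R}^n$ such that for every $\varepsilon>0$ there exist $x\in A$ and $r>0$ with $|x-a|<\varepsilon$ and $|r(x-a)-v|<\varepsilon$ (Federer's definition). *)

theory Defs
  imports "HOL-Analysis.Analysis"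
begin

definition Tan :: "'a::real_normed_vector set \<Rightarrow> 'a \<Rightarrow> 'a set" where
  "Tan A a = {v. \<forall>\<epsilon>>0. \<exists>x\<in>A. \<exists>r>0. norm (x - a) < \<epsilon> \<and> norm (r *\<^sub>R (x - a) - v) < \<epsilon>}"

end

theory Submission
  imports Defs
begin

(* Writing a point of the graph A as y + f y, its difference from a splits orthogonally into
   y - alpha in T and f y - f alpha in the orthogonal complement.  If Tan(A,a) lies in T, a
   compactness argument on the unit sphere shows that the directions of points of A near a
   approach T; hence, for every eta > 0, the orthogonal part is eventually at most eta times
   the T-part, which is Df(alpha) = 0.  Conversely, along the segment t |-> alpha + t v (v in T)
   the graph has the difference quotients of v + Df(alpha) v, so every v in T is a tangent
   vector. *)

lemma Tan_if_tendsto: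
  assumes "F \<noteq> bot" and "eventually (\<lambda>i. x i \<in> A \<and> r i > 0) F"
    and "(x \<longlongrightarrow> a) F" and "((\<lambda>i. r i *\<^sub>R (x i - a)) \<longlongrightarrow> v) F"
  shows "v \<in> Tan A a"
  unfolding Tan_def
proof (intro CollectI allI impI)
  fix \<epsilon> :: real
  assume "\<epsilon> > 0"
  have "eventually (\<lambda>i. x i \<in> A \<and> r i > 0 \<and> norm (x i - a) < \<epsilon>
      \<and> norm (r i *\<^sub>R (x i - a) - v) < \<epsilon>) F"
    using assms(2) tendstoD[OF assms(3) \<open>\<epsilon> > 0\<close>] tendstoD[OF assms(4) \<open>\<epsilon> > 0\<close>]
    by eventually_elim (simp add: dist_norm)
  then show "\<exists>x\<in>A. \<exists>r>0. norm (x - a) < \<epsilon> \<and> norm (r *\<^sub>R (x - a) - v) < \<epsilon>"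
    using eventually_happens'[OF assms(1)] by blast
qed

lemma Tan_subset_imp_eventually_sgn_near:
  fixes a :: "'a::euclidean_space"
  assumes "Tan A a \<subseteq> S" and "e > 0"
  shows "eventually (\<lambda>x. \<exists>v\<in>S. dist (sgn (x - a)) v < e) (at a within A)"
proof (rule ccontr)
  assume "\<not> ?thesis"
  then have "\<exists>x\<in>A. x \<noteq> a \<and> dist x a < d \<and> \<not> (\<exists>v\<in>S. dist (sgn (x - a)) v < e)" if "d > 0" for d
    using that unfolding eventually_at by blast
  then have "\<exists>x\<in>A. x \<noteq> a \<and> dist x a < inverse (Suc k) \<and> (\<forall>v\<in>S. e \<le> dist (sgn (x - a)) v)" for k
    by (simp add: not_less)
  then obtain x where x: "\<And>k. x k \<in> A" "\<And>k. x k \<noteq> a" "\<And>k. dist (x k) a < inverse (Suc k)"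
    and far: "\<And>k v. v \<in> S \<Longrightarrow> e \<le> dist (sgn (x k - a)) v"
    by metis
  have "(\<lambda>k. x k - a) \<longlonglongrightarrow> 0"
    using x(3) by (intro Lim_null_comparison[OF _ LIMSEQ_inverse_real_of_nat])
      (simp add: dist_norm less_imp_le)
  then have x_lim: "x \<longlonglongrightarrow> a"
    by (rule LIM_zero_cancel)
  have "\<forall>k. sgn (x k - a) \<in> sphere 0 1"
    using x(2) by (simp add: norm_sgn)
  then obtain v \<sigma> where "strict_mono \<sigma>" and "((\<lambda>k. sgn (x k - a)) \<circ> \<sigma>) \<longlonglongrightarrow> v"
    by (rule seq_compactE[OF compact_imp_seq_compact[OF compact_sphere]])
  then have v_lim: "(\<lambda>k. sgn (x (\<sigma> k) - a)) \<longlonglongrightarrow> v"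
    by (simp add: o_def)
  have "v \<in> Tan A a"
  proof (rule Tan_if_tendsto[where F = sequentially and x = "x \<circ> \<sigma>"
        and r = "\<lambda>k. inverse (norm (x (\<sigma> k) - a))"])
    show "(x \<circ> \<sigma>) \<longlonglongrightarrow> a"
      using LIMSEQ_subseq_LIMSEQ[OF x_lim \<open>strict_mono \<sigma>\<close>] .
    show "(\<lambda>k. inverse (norm (x (\<sigma> k) - a)) *\<^sub>R ((x \<circ> \<sigma>) k - a)) \<longlonglongrightarrow> v"
      using v_lim by (simp add: sgn_div_norm divide_inverse_commute)
  qed (use x in auto)
  then have "v \<in> S"
    using assms(1) by blast
  moreover obtain k where "dist (sgn (x (\<sigma> k) - a)) v < e"
    using tendstoD[OF v_lim \<open>e > 0\<close>] by (auto simp: eventually_sequentially)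
  ultimately show False
    using far[of v "\<sigma> k"] by linarith
qed

lemma norm_le_norm_add_orthogonal_comp:
  assumes "subspace T" and "z \<in> T" and "w \<in> orthogonal_comp T"
  shows "norm w \<le> norm (z + w)"
proof -
  have "orthogonal z w"
    using assms(2,3) unfolding orthogonal_comp_def by blast
  then have "(norm w)\<^sup>2 \<le> (norm (z + w))\<^sup>2"
    by (simp add: norm_add_Pythagorean)
  then show ?thesis
    by (simp add: power2_le_iff_abs_le)
qed

lemma norm_orthogonal_comp_le_sgn_dist:
  assumes T: "subspace T" and "u \<in> T" and "w \<in> orthogonal_comp T" and "v \<in> T"
  shows "norm w \<le> norm (u + w) * norm (sgn (u + w) - v)"
proof (cases "u + w = 0")
  case True
  then show ?thesis
    using norm_le_norm_add_orthogonal_comp[OF T assms(2,3)] by simp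
next
  case False
  define d where "d = norm (u + w)"
  then have "d > 0"
    using False by simp
  have "norm (w /\<^sub>R d) \<le> norm ((u /\<^sub>R d - v) + w /\<^sub>R d)"
    using assms by (intro norm_le_norm_add_orthogonal_comp[OF T])
      (simp_all add: subspace_diff subspace_scale subspace_orthogonal_comp)
  also have "(u /\<^sub>R d - v) + w /\<^sub>R d = sgn (u + w) - v"
    by (simp add: d_def sgn_div_norm algebra_simps)
  finally have "d * norm (w /\<^sub>R d) \<le> d * norm (sgn (u + w) - v)"
    using \<open>d > 0\<close> by simp
  then show ?thesis
    using \<open>d > 0\<close> by (simp add: d_def mult.assoc[symmetric])
qed

lemma filterlim_graph_at:
  assumes T: "subspace T" and "\<alpha> \<in> T"
    and f_orth: "\<forall>y\<in>T. f y \<in> orthogonal_comp T"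
    and "continuous (at \<alpha> within T) f"
  shows "filterlim (\<lambda>y. y + f y) (at (\<alpha> + f \<alpha>) within (\<lambda>y. y + f y) ` T) (at \<alpha> within T)"
proof -
  have graph_ne: "y + f y \<noteq> \<alpha> + f \<alpha>" if "y \<in> T" "y \<noteq> \<alpha>" for y
  proof
    assume "y + f y = \<alpha> + f \<alpha>"
    moreover have "norm (f y - f \<alpha>) \<le> norm ((y - \<alpha>) + (f y - f \<alpha>))"
      by (intro norm_le_norm_add_orthogonal_comp[OF T])
        (simp_all add: T \<open>\<alpha> \<in> T\<close> f_orth that(1) subspace_diff subspace_orthogonal_comp)
    ultimately show False
      using that(2) by (simp add: algebra_simps)
  qed
  have "((\<lambda>y. y + f y) \<longlongrightarrow> \<alpha> + f \<alpha>) (at \<alpha> within T)"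
    using \<open>continuous (at \<alpha> within T) f\<close> by (simp add: continuous_within tendsto_add)
  then show ?thesis
    unfolding filterlim_at using graph_ne by (auto simp: eventually_at_filter)
qed

lemma has_derivative_zero_if_Tan_graph_subset:
  fixes T :: "'a::euclidean_space set"
  assumes T: "subspace T" and "\<alpha> \<in> T"
    and f_orth: "\<forall>y\<in>T. f y \<in> orthogonal_comp T"
    and "continuous (at \<alpha> within T) f"
    and Tan: "Tan ((\<lambda>y. y + f y) ` T) (\<alpha> + f \<alpha>) \<subseteq> T"
  shows "(f has_derivative (\<lambda>x. 0)) (at \<alpha> within T)"
proof -
  let ?g = "\<lambda>y. y + f y"
  have diff_T: "y - \<alpha> \<in> T" if "y \<in> T" for y
    using T \<open>\<alpha> \<in> T\<close> that by (simp add: subspace_diff)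
  have diff_orth: "f y - f \<alpha> \<in> orthogonal_comp T" if "y \<in> T" for y
    using f_orth \<open>\<alpha> \<in> T\<close> that by (simp add: subspace_diff subspace_orthogonal_comp)
  have g_diff: "?g y - ?g \<alpha> = (y - \<alpha>) + (f y - f \<alpha>)" for y
    by (simp add: algebra_simps)
  note g_lim = filterlim_graph_at[OF assms(1-4)]
  show ?thesis
    unfolding has_derivative_within_alt2
  proof (intro conjI allI impI)
    fix \<eta> :: real
    assume "\<eta> > 0"
    define e where "e = \<eta> / (1 + \<eta>)"
    have "e > 0"
      using \<open>\<eta> > 0\<close> by (simp add: e_def)
    have "eventually (\<lambda>y. \<exists>v\<in>T. dist (sgn (?g y - ?g \<alpha>)) v < e) (at \<alpha> within T)"
      using eventually_compose_filterlim[OF Tan_subset_imp_eventually_sgn_near[OF Tan \<open>e > 0\<close>] g_lim] .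
    moreover have "eventually (\<lambda>y. y \<in> T) (at \<alpha> within T)"
      by (simp add: eventually_at_filter)
    ultimately show "eventually (\<lambda>y. norm (f y - f \<alpha> - 0) \<le> \<eta> * norm (y - \<alpha>)) (at \<alpha> within T)"
    proof eventually_elim
      case (elim y)
      then obtain v where "v \<in> T" and v: "norm (sgn (?g y - ?g \<alpha>) - v) < e"
        by (auto simp: dist_norm)
      define u w where "u = y - \<alpha>" and "w = f y - f \<alpha>"
      have "norm w \<le> norm (u + w) * norm (sgn (u + w) - v)"
        using norm_orthogonal_comp_le_sgn_dist[OF T diff_T diff_orth \<open>v \<in> T\<close>] elim
        by (simp add: u_def w_def)
      also have "\<dots> \<le> norm (u + w) * e"
        using v g_diff[of y] by (simp add: u_def w_def mult_left_mono)
      also have "\<dots> \<le> e * (norm u + norm w)"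
        using \<open>e > 0\<close> by (simp add: norm_triangle_ineq mult.commute)
      finally have "norm w \<le> e * (norm u + norm w)" .
      then have "norm w * (1 + \<eta>) \<le> \<eta> * (norm u + norm w)"
        using \<open>\<eta> > 0\<close> by (simp add: e_def field_simps)
      then show ?case
        by (simp add: u_def w_def algebra_simps)
    qed
  qed simp
qed

lemma derivative_graph_in_Tan_graph:
  assumes T: "subspace T" and "\<alpha> \<in> T" and "v \<in> T"
    and f': "(f has_derivative f') (at \<alpha> within T)"
  shows "v + f' v \<in> Tan ((\<lambda>y. y + f y) ` T) (\<alpha> + f \<alpha>)"
proof -
  let ?h = "\<lambda>t::real. \<alpha> + t *\<^sub>R v"
  let ?g = "\<lambda>t. ?h t + f (?h t)"
  have h_T: "?h t \<in> T" for t
    using T \<open>\<alpha> \<in> T\<close> \<open>v \<in> T\<close> by (simp add: subspace_add subspace_scale)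
  have "(?h has_derivative (\<lambda>t. t *\<^sub>R v)) (at 0 within {0<..})"
    by (auto intro!: derivative_eq_intros)
  moreover have "(f has_derivative f') (at (?h 0) within ?h ` {0<..})"
    using h_T by (auto intro!: has_derivative_subset[OF f'])
  ultimately have "((f \<circ> ?h) has_derivative (f' \<circ> (\<lambda>t. t *\<^sub>R v))) (at 0 within {0<..})"
    by (rule diff_chain_within)
  moreover have "linear f'"
    using f' by (simp add: has_derivative_linear)
  ultimately have g': "(?g has_derivative (\<lambda>t. t *\<^sub>R (v + f' v))) (at 0 within {0<..})"
    by (auto intro!: derivative_eq_intros simp: o_def linear_scale scaleR_add_right)
  show ?thesis
  proof (rule Tan_if_tendsto[where F = "at_right 0" and x = ?g and r = inverse])
    show "eventually (\<lambda>t. ?g t \<in> (\<lambda>y. y + f y) ` T \<and> inverse t > 0) (at_right 0)"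
      using eventually_at_right_less h_T by (auto elim!: eventually_mono)
    show "(?g \<longlongrightarrow> \<alpha> + f \<alpha>) (at_right 0)"
      using has_derivative_continuous[OF g'] by (simp add: continuous_within)
    have "((\<lambda>t. (1 / norm (t - 0)) *\<^sub>R (?g t - (?g 0 + (t - 0) *\<^sub>R (v + f' v)))) \<longlongrightarrow> 0) (at_right 0)"
      using g' by (simp only: has_derivative_within)
    moreover have "eventually (\<lambda>t. (1 / norm (t - 0)) *\<^sub>R (?g t - (?g 0 + (t - 0) *\<^sub>R (v + f' v)))
        = inverse t *\<^sub>R (?g t - (\<alpha> + f \<alpha>)) - (v + f' v)) (at_right 0)"
      using eventually_at_right_less[of "0::real"]
      by eventually_elim (simp add: abs_of_pos algebra_simps divide_inverse_commute)
    ultimately show "((\<lambda>t. inverse t *\<^sub>R (?g t - (\<alpha> + f \<alpha>))) \<longlongrightarrow> v + f' v) (at_right 0)"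
      by (auto intro: LIM_zero_cancel simp: tendsto_cong)
  qed simp
qed

theorem lemma2p43:
  fixes T :: "'a::euclidean_space set" and f :: "'a \<Rightarrow> 'a" and \<alpha> :: 'a
  assumes "subspace T" and "dim T = DIM('a) - 1"
    and "\<alpha> \<in> T"
    and "\<forall>y\<in>T. f y \<in> orthogonal_comp T"
    and "continuous (at \<alpha> within T) f"
    and "Tan {y + f y | y. y \<in> T} (\<alpha> + f \<alpha>) \<subseteq> T"
  shows "(f has_derivative (\<lambda>x. 0)) (at \<alpha> within T)
    \<and> Tan {y + f y | y. y \<in> T} (\<alpha> + f \<alpha>) = T"
proof -
  have graph: "{y + f y | y. y \<in> T} = (\<lambda>y. y + f y) ` T"
    by blast
  have deriv: "(f has_derivative (\<lambda>x. 0)) (at \<alpha> within T)"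
    using has_derivative_zero_if_Tan_graph_subset[of T \<alpha> f] assms(1,3-6) unfolding graph by blast
  have "T \<subseteq> Tan {y + f y | y. y \<in> T} (\<alpha> + f \<alpha>)"
    using derivative_graph_in_Tan_graph[OF assms(1,3) _ deriv] unfolding graph by (metis add_0_right subsetI)
  with deriv assms(6) show ?thesis
    by blast
qed

end
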